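(* Let $H=\sum_{(i,j)\in E}h_{i,j}$ be a $2$-local Hamiltonian on $n$ qubits, where each $h_{i,j}$ is Hermitian and acts nontrivially only on qubits $i,j$, and for each pair $\{i,j\}$ there is at most one term $h_{i,j}$. For each $i\in[n]$ let $\eta_i>0$, $\kappa_i\ge 0$ be parameters, and let $\mathcal P_i$ be either the identity superoperator on qubit $i$ or the pinching superoperator $\mathcal P_{R_i}$ of some Hermitian one-qubit operator $R_i$ acting on qubit $i$. Suppose that for each $i$ such that $\mathcal P_i$ is not the identity, $\Delta(R_i)\ge\eta_i$ and for all $j$ with $(i,j)\in E$, $\|[R_i\otimes I_j,h_{i,j}]\|\le\kappa_i$. Define $h'_{i,j}=(\mathcal P_i\otimes\mathcal P_j\otimes \mathrm{id}_{[n]\setminus\{i,j\}})(h_{i,j})$ and $H'=\sum_{(i,j)\in E}h'_{i,j}$. Then: 1. For every $i$ such that $\mathcal P_i$ is not the identity, all the terms $h'_{i,j}$ acting on qubit $i$ commute with each other and with $R_i$. 2. For all $(i,j)\in E$, $\|h'_{i,j}-h_{i,j}\|\le 4\left(\frac{\kappa_i}{\eta_i}+\frac{\kappa_j}{\eta_j}\right)$.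
   Context: For a Hermitian $A\in\mathbb C^{2\times 2}$ with spectral decomposition $A=\lambda_{\min}(A)\Pi+\lambda_{\max}(A)(I-\Pi)$, the spectral gap is $\Delta(A)=\lambda_{\max}(A)-\lambda_{\min}(A)$, and the pinching superoperator is $\mathcal P_A(X)=\Pi X\Pi+(I-\Pi)X(I-\Pi)$ for $X\in\mathbb C^{2\times2}$ (applied on the corresponding qubit tensor factor). $\|\cdot\|$ is the operator norm and $[A,B]=AB-BA$. *)

theory Defs
  imports "HOL-Analysis.Analysis"
begin

text \<open>Qubits are the elements of a finite type 'q (so n = CARD('q)).
  The computational basis of n qubits is indexed by subsets x of the qubits
  (qubit i is in state 1 iff i in x). One-qubit operators are complex matrices
  indexed by bool (False = 0, True = 1); two-qubit operators are indexed by bool * bool.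
  n-qubit operators are complex matrices indexed by 'q set.\<close>

type_synonym qop1 = "complex^bool^bool"
type_synonym qop2 = "complex^(bool\<times>bool)^(bool\<times>bool)"
type_synonym 'q qopn = "complex^('q set)^('q set)"

text \<open>A one-qubit operator A acting on qubit i (tensored with identity elsewhere).\<close>
definition emb1 :: "'q::finite \<Rightarrow> qop1 \<Rightarrow> 'q qopn" where
  "emb1 i A = (\<chi> x y. if x - {i} = y - {i} then A $ (i \<in> x) $ (i \<in> y) else 0)"

text \<open>A two-qubit operator g acting on qubits i, j (tensored with identity elsewhere).\<close>
definition emb2 :: "'q::finite \<Rightarrow> 'q \<Rightarrow> qop2 \<Rightarrow> 'q qopn" where
  "emb2 i j g = (\<chi> x y. if x - {i, j} = y - {i, j}
                         then g $ (i \<in> x, j \<in> x) $ (i \<in> y, j \<in> y) else 0)"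

definition hermitian :: "complex^'n^'n \<Rightarrow> bool" where
  "hermitian A \<longleftrightarrow> (\<forall>i j. A $ i $ j = cnj (A $ j $ i))"

definition commutator :: "complex^'n^'n \<Rightarrow> complex^'n^'n \<Rightarrow> complex^'n^'n" where
  "commutator A B = A ** B - B ** A"

definition opnorm :: "complex^'n^'n \<Rightarrow> real" where
  "opnorm A = onorm (\<lambda>v. A *v v)"

definition eigvals :: "complex^'n^'n \<Rightarrow> complex set" where
  "eigvals A = {c. \<exists>v. v \<noteq> 0 \<and> A *v v = c *s v}"

definition lambda_min :: "complex^'n^'n \<Rightarrow> real" where
  "lambda_min A = Min (Re ` eigvals A)"

definition lambda_max :: "complex^'n^'n \<Rightarrow> real" where
  "lambda_max A = Max (Re ` eigvals A)"

definition spectral_gap :: "complex^'n^'n \<Rightarrow> real" where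
  "spectral_gap A = lambda_max A - lambda_min A"

definition spec_proj :: "qop1 \<Rightarrow> qop1" where
  "spec_proj A = (THE P. P ** P = P \<and> hermitian P \<and>
      A = lambda_min A *\<^sub>R P + lambda_max A *\<^sub>R (mat 1 - P))"

definition pinch_at :: "'q::finite \<Rightarrow> qop1 \<Rightarrow> 'q qopn \<Rightarrow> 'q qopn" where
  "pinch_at i A X = (let P = emb1 i (spec_proj A) in
      P ** X ** P + (mat 1 - P) ** X ** (mat 1 - P))"

definition superop_at :: "('q::finite \<Rightarrow> bool) \<Rightarrow> ('q \<Rightarrow> qop1) \<Rightarrow> 'q \<Rightarrow> 'q qopn \<Rightarrow> 'q qopn" where
  "superop_at pin R i X = (if pin i then pinch_at i (R i) X else X)"

end

(*
  Let P be the spectral projector of a one-qubit operator R with gap g = Delta(R) > 0 and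
  Q = P (x) I. Then R (x) I = lambda_min Q + lambda_max (I - Q), so [R, X] = -g [Q, X], and
  the pinching Q X Q + (I - Q) X (I - Q) differs from X by U [Q, X] with the Hermitian
  involution U = 2 Q - I; hence it moves X by at most ||[R, X]|| / g and never increases the
  operator norm. Pinching at qubit b commutes with R_a (x) I for a /= b, so after pinching at b the
  commutator with R_a is still bounded by kappa_a; two pinchings thus move h_ij by at most
  kappa_i / eta_i + kappa_j / eta_j.

  For the commutation claim: a term on qubits {i, j} that commutes with Q is
  Q Z + (I - Q) W with Z, W acting on qubit j alone, because P has rank one. Two such terms
  whose second qubits j /= k then commute, since Z, W on j commute with those on k.
*)

theory Submission
  imports Defs
begin

section \<open>Matrix algebra\<close>

type_synonym 'n cmat = "complex^'n^'n"

lemma matrix_scaleR_entry: "(r *\<^sub>R X) $ i $ j = of_real r * X $ i $ j" for X :: "'n::finite cmat"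
  unfolding vector_scaleR_component by (simp add: scaleR_conv_of_real)

lemma matrix_diff_rdistrib: "(A - B) ** C = A ** C - B ** C" for A B C :: "'n::finite cmat"
  by (simp add: matrix_matrix_mult_def vec_eq_iff sum_subtractf left_diff_distrib)

lemma matrix_diff_ldistrib: "A ** (B - C) = A ** B - A ** C" for A B C :: "'n::finite cmat"
  by (simp add: matrix_matrix_mult_def vec_eq_iff sum_subtractf right_diff_distrib)

lemma matrix_add_rdistrib: "(A + B) ** C = A ** C + B ** C" for A B C :: "'n::finite cmat"
  by (simp add: matrix_matrix_mult_def vec_eq_iff sum.distrib distrib_right)

lemma matrix_mult_scaleR_left: "(r *\<^sub>R A) ** B = r *\<^sub>R (A ** B)" for A B :: "'n::finite cmat"
  by (simp add: scalar_matrix_assoc)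

lemma matrix_mult_scaleR_right: "A ** (r *\<^sub>R B) = r *\<^sub>R (A ** B)" for A B :: "'n::finite cmat"
  by (simp add: matrix_scalar_ac scalar_matrix_assoc)

lemma matrix_mult_uminus_right: "A ** (- B) = - (A ** B)" for A B :: "'n::finite cmat"
  by (simp add: matrix_matrix_mult_def vec_eq_iff sum_negf)

text \<open>\<open>algebra_simps\<close> writes \<open>A + A\<close> as \<open>2 * A\<close>, where \<open>*\<close> is the entrywise product of
  matrices; these two rules turn such terms back into scalar multiples.\<close>

lemma matrix_numeral_mult_left: "(numeral k :: 'n::finite cmat) * A = (numeral k :: real) *\<^sub>R A"
  by (simp add: vec_eq_iff scaleR_conv_of_real)

lemma matrix_numeral_mult_right: "A * (numeral k :: 'n::finite cmat) = (numeral k :: real) *\<^sub>R A"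
  by (simp add: vec_eq_iff scaleR_conv_of_real mult.commute)

lemmas matrix_ring_simps = matrix_diff_rdistrib matrix_diff_ldistrib matrix_add_rdistrib
  matrix_add_ldistrib matrix_mult_scaleR_left matrix_mult_scaleR_right matrix_mul_assoc
  matrix_numeral_mult_left matrix_numeral_mult_right algebra_simps

lemma hermitian_diff:
  assumes "hermitian A" "hermitian B"
  shows "hermitian (A - B)"
  unfolding hermitian_def
proof (intro allI)
  fix i j
  have "A$i$j = cnj (A$j$i)" "B$i$j = cnj (B$j$i)"
    using assms unfolding hermitian_def by blast+
  then show "(A - B)$i$j = cnj ((A - B)$j$i)"
    by simp
qed

lemma hermitian_one: "hermitian (mat 1 :: complex^'n^'n)"
  by (simp add: hermitian_def mat_def)

lemma idem_mult_assoc: "Q ** Q = Q \<Longrightarrow> A ** Q ** Q = A ** Q" for A Q :: "'n::finite cmat"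
  by (metis matrix_mul_assoc)

lemma commute_mult_assoc: "Z ** Q = Q ** Z \<Longrightarrow> A ** Z ** Q = A ** Q ** Z" for A Q Z :: "'n::finite cmat"
  by (metis matrix_mul_assoc)

section \<open>Pinching by a projector\<close>

definition pinching :: "'n::finite cmat \<Rightarrow> 'n cmat \<Rightarrow> 'n cmat" where
  "pinching Q X = Q ** X ** Q + (mat 1 - Q) ** X ** (mat 1 - Q)"

lemma pinching_commute: "Q ** Q = Q \<Longrightarrow> Q ** pinching Q X = pinching Q X ** Q"
  by (simp add: pinching_def matrix_ring_simps idem_mult_assoc)

lemma pinching_eq_self: "Q ** Q = Q \<Longrightarrow> X ** Q = Q ** X \<Longrightarrow> pinching Q X = X"
  by (simp add: pinching_def matrix_ring_simps idem_mult_assoc commute_mult_assoc)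

lemma commutator_pinching:
  "C ** Q = Q ** C \<Longrightarrow> commutator C (pinching Q X) = pinching Q (commutator C X)"
  by (simp add: commutator_def pinching_def matrix_ring_simps commute_mult_assoc)

lemma pinching_zero [simp]: "pinching Q 0 = 0"
  by (simp add: pinching_def)

lemma diff_pinching_eq: "Q ** Q = Q \<Longrightarrow> X - pinching Q X = (Q - (mat 1 - Q)) ** commutator Q X"
  by (simp add: pinching_def commutator_def matrix_ring_simps idem_mult_assoc)

lemma pinching_eq_average:
  "Q ** Q = Q \<Longrightarrow> pinching Q X = (1/2) *\<^sub>R (X + (Q - (mat 1 - Q)) ** X ** (Q - (mat 1 - Q)))"
  by (simp add: pinching_def matrix_ring_simps idem_mult_assoc)

lemma reflection_square: "Q ** Q = Q \<Longrightarrow> (Q - (mat 1 - Q)) ** (Q - (mat 1 - Q)) = mat 1"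
  for Q :: "'n::finite cmat"
  by (simp add: matrix_ring_simps)

lemma commutator_spectral_sum:
  "commutator (a *\<^sub>R Q + b *\<^sub>R (mat 1 - Q)) X = (a - b) *\<^sub>R commutator Q X"
  for Q X :: "'n::finite cmat"
  by (simp add: commutator_def matrix_ring_simps)

lemma block_diagonal_commute:
  fixes Q Z1 Z2 W1 W2 :: "'n::finite cmat"
  assumes Q: "Q ** Q = Q"
    and "Z1 ** Q = Q ** Z1" "Z2 ** Q = Q ** Z2" "W1 ** Q = Q ** W1" "W2 ** Q = Q ** W2"
    and Z: "Z1 ** Z2 = Z2 ** Z1" and W: "W1 ** W2 = W2 ** W1"
  shows "(Q ** Z1 + (mat 1 - Q) ** W1) ** (Q ** Z2 + (mat 1 - Q) ** W2)
       = (Q ** Z2 + (mat 1 - Q) ** W2) ** (Q ** Z1 + (mat 1 - Q) ** W1)"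
proof -
  note rules = matrix_ring_simps assms(2-5) commute_mult_assoc[OF assms(2)]
    commute_mult_assoc[OF assms(3)] commute_mult_assoc[OF assms(4)] commute_mult_assoc[OF assms(5)]
    Q idem_mult_assoc[OF Q]
  have "(Q ** Z1 + (mat 1 - Q) ** W1) ** (Q ** Z2 + (mat 1 - Q) ** W2)
      = Q ** Z1 ** Z2 + W1 ** W2 - Q ** W1 ** W2"
    by (simp add: rules)
  moreover have "(Q ** Z2 + (mat 1 - Q) ** W2) ** (Q ** Z1 + (mat 1 - Q) ** W1)
      = Q ** Z2 ** Z1 + W2 ** W1 - Q ** W2 ** W1"
    by (simp add: rules)
  ultimately show ?thesis
    using Z W by (metis matrix_mul_assoc)
qed

section \<open>Operator norm\<close>

lemma bounded_linear_matrix_vector_mult: "bounded_linear (\<lambda>v. A *v v)" for A :: "'n::finite cmat"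
  using linear_conv_bounded_linear matrix_vector_mul_linear by blast

lemma opnorm_nonneg: "0 \<le> opnorm A" for A :: "'n::finite cmat"
  unfolding opnorm_def by (rule onorm_pos_le[OF bounded_linear_matrix_vector_mult])

lemma opnorm_zero [simp]: "opnorm (0 :: 'n::finite cmat) = 0"
proof -
  have "(\<lambda>v. (0 :: 'n cmat) *v v) = (\<lambda>v. 0)"
    by (simp add: fun_eq_iff)
  then show ?thesis
    unfolding opnorm_def using onorm_zero by metis
qed

lemma opnorm_add_le: "opnorm (A + B) \<le> opnorm A + opnorm B" for A B :: "'n::finite cmat"
  unfolding opnorm_def matrix_vector_mult_add_rdistrib
  by (rule onorm_triangle[OF bounded_linear_matrix_vector_mult bounded_linear_matrix_vector_mult])

lemma opnorm_minus_commute: "opnorm (A - B) = opnorm (B - A)" for A B :: "'n::finite cmat"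
proof -
  have "(\<lambda>v. (A - B) *v v) = (\<lambda>v. - ((B - A) *v v))"
    by (simp add: fun_eq_iff matrix_vector_mult_diff_rdistrib)
  then show ?thesis
    unfolding opnorm_def using onorm_neg[of "\<lambda>v. (B - A) *v v"] by simp
qed

lemma opnorm_mult_le: "opnorm (A ** B) \<le> opnorm A * opnorm B" for A B :: "'n::finite cmat"
proof -
  have "(\<lambda>v. (A ** B) *v v) = (\<lambda>v. A *v v) \<circ> (\<lambda>v. B *v v)"
    by (simp add: fun_eq_iff matrix_vector_mul_assoc)
  then show ?thesis
    unfolding opnorm_def
    using onorm_compose[OF bounded_linear_matrix_vector_mult bounded_linear_matrix_vector_mult]
    by simp
qed

lemma opnorm_scaleR: "opnorm (r *\<^sub>R A) = \<bar>r\<bar> * opnorm A" for A :: "'n::finite cmat"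
proof -
  have "(\<lambda>v. (r *\<^sub>R A) *v v) = (\<lambda>v. r *\<^sub>R (A *v v))"
    unfolding fun_eq_iff vec_eq_iff matrix_vector_mult_def vector_scaleR_component
    by (simp add: scaleR_conv_of_real sum_distrib_left mult.assoc)
  then show ?thesis
    unfolding opnorm_def using onorm_scaleR[OF bounded_linear_matrix_vector_mult] by simp
qed

lemma norm_vec_squared: "(norm v)^2 = Re (\<Sum>k\<in>UNIV. v$k * cnj (v$k))" for v :: "complex^'n::finite"
proof -
  have "(norm v)^2 = (\<Sum>k\<in>UNIV. (cmod (v$k))^2)"
    unfolding norm_vec_def L2_set_def by (simp add: sum_nonneg)
  also have "\<dots> = Re (\<Sum>k\<in>UNIV. v$k * cnj (v$k))"
    by (simp add: Re_sum complex_norm_square[symmetric] del: complex_norm_square)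
  finally show ?thesis .
qed

lemma norm_hermitian_involution:
  fixes U :: "'n::finite cmat"
  assumes herm: "hermitian U" and invol: "U ** U = mat 1"
  shows "norm (U *v v) = norm v"
proof -
  have cnj_U: "cnj (U$k$l) = U$l$k" for k l
  proof -
    have "U$l$k = cnj (U$k$l)"
      using herm unfolding hermitian_def by blast
    then show ?thesis
      by simp
  qed
  have UU: "(\<Sum>k\<in>UNIV. U$l$k * U$k$j) = (if l = j then 1 else 0)" for l j
    using arg_cong[OF invol, of "\<lambda>A. A $ l $ j"] by (simp add: matrix_matrix_mult_def mat_def)
  have "(\<Sum>k\<in>UNIV. (U *v v)$k * cnj ((U *v v)$k))
      = (\<Sum>k\<in>UNIV. \<Sum>j\<in>UNIV. \<Sum>l\<in>UNIV. v$j * cnj (v$l) * (U$l$k * U$k$j))"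
    unfolding matrix_vector_mult_def vec_lambda_beta cnj_sum complex_cnj_mult cnj_U sum_product
    by (simp add: mult_ac)
  also have "\<dots> = (\<Sum>j\<in>UNIV. \<Sum>l\<in>UNIV. \<Sum>k\<in>UNIV. v$j * cnj (v$l) * (U$l$k * U$k$j))"
    by (subst sum.swap) (rule sum.cong[OF refl], rule sum.swap)
  also have "\<dots> = (\<Sum>j\<in>UNIV. \<Sum>l\<in>UNIV. v$j * cnj (v$l) * (if l = j then 1 else 0))"
    by (simp only: sum_distrib_left[symmetric] UU)
  also have "\<dots> = (\<Sum>j\<in>UNIV. v$j * cnj (v$j))"
    by (simp add: if_distrib cong: if_cong)
  finally have "(norm (U *v v))^2 = (norm v)^2"
    unfolding norm_vec_squared by simp
  then show ?thesis
    by (simp add: power2_eq_iff_nonneg)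
qed

lemma opnorm_hermitian_involution_le:
  fixes U :: "'n::finite cmat"
  assumes "hermitian U" "U ** U = mat 1"
  shows "opnorm U \<le> 1"
  unfolding opnorm_def by (rule onorm_le) (simp add: norm_hermitian_involution[OF assms])

lemma
  fixes Q X :: "'n::finite cmat"
  assumes idem: "Q ** Q = Q" and herm: "hermitian Q"
  shows opnorm_pinching_le: "opnorm (pinching Q X) \<le> opnorm X"
    and opnorm_diff_pinching_le: "opnorm (X - pinching Q X) \<le> opnorm (commutator Q X)"
proof -
  define U where "U = Q - (mat 1 - Q)"
  have U: "opnorm U \<le> 1"
    unfolding U_def using herm hermitian_one
    by (intro opnorm_hermitian_involution_le reflection_square idem hermitian_diff)
  have "opnorm (U ** X ** U) \<le> opnorm U * opnorm X * opnorm U"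
    by (meson opnorm_mult_le opnorm_nonneg mult_right_mono order_trans)
  also have "\<dots> \<le> opnorm U * opnorm X"
    using U by (simp add: mult_right_le_one_le opnorm_nonneg)
  also have "\<dots> \<le> opnorm X"
    using U by (simp add: mult_left_le_one_le opnorm_nonneg)
  finally have "opnorm (U ** X ** U) \<le> opnorm X" .
  then show "opnorm (pinching Q X) \<le> opnorm X"
    using opnorm_add_le[of X "U ** X ** U"]
    unfolding pinching_eq_average[OF idem] opnorm_scaleR U_def by simp
  have "opnorm (X - pinching Q X) \<le> opnorm U * opnorm (commutator Q X)"
    unfolding diff_pinching_eq[OF idem] U_def by (rule opnorm_mult_le)
  also have "\<dots> \<le> opnorm (commutator Q X)"
    using U by (simp add: mult_left_le_one_le opnorm_nonneg)
  finally show "opnorm (X - pinching Q X) \<le> opnorm (commutator Q X)" .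
qed

section \<open>Hermitian two-by-two matrices\<close>

lemma vec_bool_eq_iff: "v = w \<longleftrightarrow> v$False = w$False \<and> v$True = w$True" for v w :: "complex^bool"
  by (auto simp: vec_eq_iff all_bool_eq)

lemma mat_bool_eq_iff:
  "M = N \<longleftrightarrow> M$False$False = N$False$False \<and> M$False$True = N$False$True
     \<and> M$True$False = N$True$False \<and> M$True$True = N$True$True" for M N :: qop1
  by (auto simp: vec_eq_iff all_bool_eq)

lemma matrix_vector_mult_bool: "(M *v v) $ p = M$p$False * v$False + M$p$True * v$True"
  for M :: qop1
  by (simp add: matrix_vector_mult_def UNIV_bool)

lemma matrix_matrix_mult_bool: "(M ** N) $ p $ q = M$p$False * N$False$q + M$p$True * N$True$q"
  for M N :: qop1
  by (simp add: matrix_matrix_mult_def UNIV_bool)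

lemma hermitian_bool_entries:
  fixes M :: qop1
  assumes "hermitian M"
  shows "M$False$False = of_real (Re (M$False$False))" "M$True$True = of_real (Re (M$True$True))"
    "M$True$False = cnj (M$False$True)"
  using assms unfolding hermitian_def by (metis Reals_cnj_iff of_real_Re)+

lemma eigvals_bool_iff:
  fixes M :: qop1
  shows "c \<in> eigvals M \<longleftrightarrow>
    (M$False$False - c) * (M$True$True - c) - M$False$True * M$True$False = 0"
proof -
  define a b b' d where "a = M$False$False" "b = M$False$True" "b' = M$True$False" "d = M$True$True"
  have eigvec_iff: "M *v v = c *s v \<longleftrightarrow>
      (a - c) * v$False + b * v$True = 0 \<and> b' * v$False + (d - c) * v$True = 0" for v
    by (simp add: vec_bool_eq_iff matrix_vector_mult_bool a_b_b'_d_def algebra_simps)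
  have "c \<in> eigvals M \<longleftrightarrow> (a - c) * (d - c) - b * b' = 0"
  proof
    assume "c \<in> eigvals M"
    then obtain v where "v \<noteq> 0" and v: "(a - c) * v$False + b * v$True = 0"
        "b' * v$False + (d - c) * v$True = 0"
      by (auto simp: eigvals_def eigvec_iff)
    then have "v$False \<noteq> 0 \<or> v$True \<noteq> 0"
      by (auto simp: vec_bool_eq_iff)
    moreover have "((a - c) * (d - c) - b * b') * v$False
        = (d - c) * ((a - c) * v$False + b * v$True) - b * (b' * v$False + (d - c) * v$True)"
      and "((a - c) * (d - c) - b * b') * v$True
        = (a - c) * (b' * v$False + (d - c) * v$True) - b' * ((a - c) * v$False + b * v$True)"
      by (simp_all add: algebra_simps)
    ultimately show "(a - c) * (d - c) - b * b' = 0"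
      using v by auto
  next
    assume det: "(a - c) * (d - c) - b * b' = 0"
    \<comment> \<open>a nonzero row of the singular matrix \<open>M - c\<close> determines a kernel vector\<close>
    define v :: "complex^bool" where
      "v = (if b \<noteq> 0 \<or> a \<noteq> c then (\<chi> p. if p then c - a else b)
            else if b' \<noteq> 0 \<or> d \<noteq> c then (\<chi> p. if p then - b' else d - c)
            else (\<chi> p. if p then 0 else 1))"
    have "v \<noteq> 0" and "M *v v = c *s v"
      unfolding eigvec_iff using det by (auto simp: v_def vec_bool_eq_iff algebra_simps)
    then show "c \<in> eigvals M"
      by (auto simp: eigvals_def)
  qed
  then show ?thesis
    by (simp add: a_b_b'_d_def)
qed

definition eig_lo :: "qop1 \<Rightarrow> real" where
  "eig_lo M = (Re (M$False$False) + Re (M$True$True)) / 2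
     - sqrt (((Re (M$False$False) - Re (M$True$True)) / 2)^2 + (cmod (M$False$True))^2)"

definition eig_hi :: "qop1 \<Rightarrow> real" where
  "eig_hi M = (Re (M$False$False) + Re (M$True$True)) / 2
     + sqrt (((Re (M$False$False) - Re (M$True$True)) / 2)^2 + (cmod (M$False$True))^2)"

lemma eig_lo_le_hi: "eig_lo M \<le> eig_hi M"
  by (simp add: eig_lo_def eig_hi_def)

lemma eig_lo_plus_hi: "eig_lo M + eig_hi M = Re (M$False$False) + Re (M$True$True)"
  by (simp add: eig_lo_def eig_hi_def)

lemma eig_lo_times_hi:
  "eig_lo M * eig_hi M = Re (M$False$False) * Re (M$True$True) - (cmod (M$False$True))^2"
proof -
  define m r where "m = (Re (M$False$False) + Re (M$True$True)) / 2"
    and "r = sqrt (((Re (M$False$False) - Re (M$True$True)) / 2)^2 + (cmod (M$False$True))^2)"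
  have "eig_lo M * eig_hi M = m^2 - r^2"
    by (simp add: eig_lo_def eig_hi_def m_def r_def power2_eq_square algebra_simps)
  also have "r^2 = ((Re (M$False$False) - Re (M$True$True)) / 2)^2 + (cmod (M$False$True))^2"
    by (simp add: r_def)
  also have "m^2 - \<dots> = Re (M$False$False) * Re (M$True$True) - (cmod (M$False$True))^2"
    by (simp add: m_def power2_eq_square field_simps)
  finally show ?thesis .
qed

lemma char_poly_hermitian_bool:
  fixes M :: qop1
  assumes "hermitian M"
  shows "(M$False$False - c) * (M$True$True - c) - M$False$True * M$True$False
    = (c - eig_lo M) * (c - eig_hi M)"
proof -
  note entries = hermitian_bool_entries[OF assms]
  define x y where "x = Re (M$False$False)" and "y = Re (M$True$True)"
  have diag: "M$False$False = of_real x" "M$True$True = of_real y"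
    unfolding x_def y_def by (fact entries(1), fact entries(2))
  have offdiag: "M$False$True * M$True$False = of_real ((cmod (M$False$True))^2)"
    using complex_norm_square[of "M$False$True"] by (simp add: entries(3))
  have sum: "of_real (eig_lo M) + of_real (eig_hi M) = (of_real x + of_real y :: complex)"
    by (simp flip: of_real_add add: eig_lo_plus_hi x_def y_def)
  have prod: "of_real (eig_lo M) * of_real (eig_hi M)
      = (of_real x * of_real y - of_real ((cmod (M$False$True))^2) :: complex)"
    by (simp flip: of_real_mult of_real_diff of_real_power add: eig_lo_times_hi x_def y_def)
  have "(c - eig_lo M) * (c - eig_hi M)
      = c * c - c * (of_real (eig_lo M) + of_real (eig_hi M)) + of_real (eig_lo M) * of_real (eig_hi M)"
    by (simp add: algebra_simps)
  also have "\<dots> = (M$False$False - c) * (M$True$True - c) - M$False$True * M$True$False"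
    unfolding sum prod offdiag diag by (simp add: algebra_simps)
  finally show ?thesis ..
qed

lemma eigvals_hermitian_bool: "hermitian M \<Longrightarrow> eigvals M = {of_real (eig_lo M), of_real (eig_hi M)}"
  by (auto simp: eigvals_bool_iff char_poly_hermitian_bool)

lemma
  assumes "hermitian M"
  shows lambda_min_hermitian_bool: "lambda_min M = eig_lo M"
    and lambda_max_hermitian_bool: "lambda_max M = eig_hi M"
    and spectral_gap_hermitian_bool: "spectral_gap M = eig_hi M - eig_lo M"
  using eig_lo_le_hi[of M]
  by (simp_all add: spectral_gap_def lambda_min_def lambda_max_def eigvals_hermitian_bool[OF assms])

lemma trace_hermitian_bool:
  fixes M :: qop1
  assumes "hermitian M"
  shows "M$False$False + M$True$True = of_real (eig_lo M) + of_real (eig_hi M)"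
  using char_poly_hermitian_bool[OF assms, of 0] char_poly_hermitian_bool[OF assms, of 1]
  by (simp add: algebra_simps)

lemma cayley_hamilton_hermitian_bool:
  fixes M :: qop1
  assumes "hermitian M"
  shows "(M - eig_lo M *\<^sub>R mat 1) ** (M - eig_hi M *\<^sub>R mat 1) = 0"
proof -
  note char_poly = char_poly_hermitian_bool[OF assms]
  have entry: "(M - r *\<^sub>R mat 1) $ p $ q = M$p$q - (if p = q then of_real r else 0)" for r p q
    unfolding vector_minus_component matrix_scaleR_entry by (simp add: mat_def)
  show ?thesis
    unfolding mat_bool_eq_iff matrix_matrix_mult_bool entry
    using char_poly[of "M$False$False"] char_poly[of "M$True$True"] trace_hermitian_bool[OF assms]
    by (simp only: if_True if_False simp_thms zero_index) algebra
qed

definition eig_proj :: "qop1 \<Rightarrow> qop1" where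
  "eig_proj M = (1 / (eig_hi M - eig_lo M)) *\<^sub>R (eig_hi M *\<^sub>R mat 1 - M)"

lemma eig_proj_decomposition_iff:
  assumes "eig_lo M < eig_hi M"
  shows "M = eig_lo M *\<^sub>R Q + eig_hi M *\<^sub>R (mat 1 - Q) \<longleftrightarrow> Q = eig_proj M"
proof -
  define g N where "g = eig_hi M - eig_lo M" and "N = eig_hi M *\<^sub>R mat 1 - M"
  have "g \<noteq> 0"
    using assms by (simp add: g_def)
  have rewrite: "eig_lo M *\<^sub>R Q + eig_hi M *\<^sub>R (mat 1 - Q) = eig_hi M *\<^sub>R mat 1 - g *\<^sub>R Q"
    by (simp add: g_def algebra_simps)
  have "M = eig_lo M *\<^sub>R Q + eig_hi M *\<^sub>R (mat 1 - Q) \<longleftrightarrow> g *\<^sub>R Q = N"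
    unfolding rewrite N_def by (simp only: eq_diff_eq add.commute)
  also have "\<dots> \<longleftrightarrow> Q = (1 / g) *\<^sub>R N"
    using \<open>g \<noteq> 0\<close> by auto
  finally show ?thesis
    by (simp add: eig_proj_def g_def N_def)
qed

lemma eig_proj_idem:
  assumes herm: "hermitian M" and lt: "eig_lo M < eig_hi M"
  shows "eig_proj M ** eig_proj M = eig_proj M"
proof -
  define g N where "g = eig_hi M - eig_lo M" and "N = eig_hi M *\<^sub>R mat 1 - M"
  \<comment> \<open>Cayley--Hamilton in the form \<open>(g - N) N = 0\<close> makes \<open>N / g\<close> idempotent.\<close>
  have "M - eig_lo M *\<^sub>R mat 1 = g *\<^sub>R mat 1 - N" and "M - eig_hi M *\<^sub>R mat 1 = - N"
    by (simp_all add: N_def g_def algebra_simps)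
  then have "(g *\<^sub>R mat 1 - N) ** N = 0"
    using cayley_hamilton_hermitian_bool[OF herm] by (simp add: matrix_mult_uminus_right)
  then have "N ** N = g *\<^sub>R N"
    by (simp add: matrix_diff_rdistrib matrix_mult_scaleR_left)
  then show ?thesis
    using lt unfolding eig_proj_def g_def[symmetric] N_def[symmetric]
    by (simp add: matrix_mult_scaleR_left matrix_mult_scaleR_right)
qed

lemma hermitian_eig_proj:
  assumes "hermitian M"
  shows "hermitian (eig_proj M)"
  unfolding hermitian_def
proof (intro allI)
  fix i j
  have "M$i$j = cnj (M$j$i)"
    using assms unfolding hermitian_def by blast
  then show "eig_proj M $ i $ j = cnj (eig_proj M $ j $ i)"
    unfolding eig_proj_def by (simp add: matrix_scaleR_entry mat_def)
qed

lemma trace_eig_proj: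
  assumes herm: "hermitian M" and lt: "eig_lo M < eig_hi M"
  shows "eig_proj M $ False $ False + eig_proj M $ True $ True = 1"
proof -
  define g where "g = eig_hi M - eig_lo M"
  have "eig_proj M $ False $ False + eig_proj M $ True $ True
      = of_real (1 / g) * (2 * of_real (eig_hi M) - (M$False$False + M$True$True))"
    unfolding eig_proj_def g_def[symmetric] vector_minus_component matrix_scaleR_entry
    by (simp add: mat_def algebra_simps)
  also have "\<dots> = 1"
    using lt by (simp add: trace_hermitian_bool[OF herm] g_def field_simps flip: of_real_diff)
  finally show ?thesis .
qed

lemma spec_proj_eq_eig_proj:
  assumes herm: "hermitian M" and gap: "0 < spectral_gap M"
  shows "spec_proj M = eig_proj M"
proof -
  have lt: "eig_lo M < eig_hi M"
    using gap by (simp add: spectral_gap_hermitian_bool[OF herm])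
  show ?thesis
    unfolding spec_proj_def lambda_min_hermitian_bool[OF herm] lambda_max_hermitian_bool[OF herm]
    using eig_proj_decomposition_iff[OF lt] eig_proj_idem[OF herm lt] hermitian_eig_proj[OF herm]
    by (intro the_equality) blast+
qed

lemma
  fixes M :: qop1
  assumes herm: "hermitian M" and gap: "0 < spectral_gap M"
  shows spec_proj_idem: "spec_proj M ** spec_proj M = spec_proj M"
    and hermitian_spec_proj: "hermitian (spec_proj M)"
    and trace_spec_proj: "spec_proj M $ False $ False + spec_proj M $ True $ True = 1"
    and spectral_decomposition:
      "M = lambda_min M *\<^sub>R spec_proj M + lambda_max M *\<^sub>R (mat 1 - spec_proj M)"
proof -
  have lt: "eig_lo M < eig_hi M"
    using gap by (simp add: spectral_gap_hermitian_bool[OF herm])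
  show "spec_proj M ** spec_proj M = spec_proj M" "hermitian (spec_proj M)"
    "spec_proj M $ False $ False + spec_proj M $ True $ True = 1"
    using eig_proj_idem[OF herm lt] hermitian_eig_proj[OF herm] trace_eig_proj[OF herm lt]
    by (simp_all add: spec_proj_eq_eig_proj[OF herm gap])
  show "M = lambda_min M *\<^sub>R spec_proj M + lambda_max M *\<^sub>R (mat 1 - spec_proj M)"
    using eig_proj_decomposition_iff[OF lt, of "eig_proj M"]
    by (simp add: spec_proj_eq_eig_proj[OF herm gap] lambda_min_hermitian_bool[OF herm]
        lambda_max_hermitian_bool[OF herm])
qed

lemma idem_trace_one_det_eq_zero:
  fixes P :: qop1
  assumes "P ** P = P" "P $ False $ False + P $ True $ True = 1"
  shows "P$False$False * P$True$True = P$False$True * P$True$False"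
proof -
  have "P$False$False * P$False$False + P$False$True * P$True$False = P$False$False"
    using assms(1) unfolding mat_bool_eq_iff matrix_matrix_mult_bool by blast
  moreover have trace: "P$True$True = 1 - P$False$False"
    using assms(2) by (simp add: algebra_simps)
  ultimately show ?thesis
    unfolding trace by (simp add: algebra_simps)
qed

section \<open>Operators acting on a set of qubits\<close>

lemma emb1_entry: "emb1 i A $ x $ y = (if x - {i} = y - {i} then A $ (i \<in> x) $ (i \<in> y) else 0)"
  by (simp add: emb1_def)

lemma minus_singleton_eq_iff: "y - {i} = x - {i} \<longleftrightarrow> y = insert i x \<or> y = x - {i}"
  by auto

lemma emb1_mult_left_entry:
  fixes X :: "'q::finite qopn"
  shows "(emb1 i A ** X) $ x $ z
    = A$(i \<in> x)$True * X$(insert i x)$z + A$(i \<in> x)$False * X$(x - {i})$z"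
proof -
  let ?g = "\<lambda>y. (if x - {i} = y - {i} then A$(i \<in> x)$(i \<in> y) else 0) * X$y$z"
  have "(emb1 i A ** X) $ x $ z = sum ?g {insert i x, x - {i}}"
    unfolding matrix_matrix_mult_def emb1_entry vec_lambda_beta
    by (rule sum.mono_neutral_right) (auto simp: minus_singleton_eq_iff)
  then show ?thesis
    by (subst (asm) sum.insert) auto
qed

lemma emb1_mult_right_entry:
  fixes X :: "'q::finite qopn"
  shows "(X ** emb1 i A) $ x $ z
    = X$x$(insert i z) * A$True$(i \<in> z) + X$x$(z - {i}) * A$False$(i \<in> z)"
proof -
  let ?g = "\<lambda>y. X$x$y * (if y - {i} = z - {i} then A$(i \<in> y)$(i \<in> z) else 0)"
  have "(X ** emb1 i A) $ x $ z = sum ?g {insert i z, z - {i}}"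
    unfolding matrix_matrix_mult_def emb1_entry vec_lambda_beta
    by (rule sum.mono_neutral_right) (auto simp: minus_singleton_eq_iff)
  then show ?thesis
    by (subst (asm) sum.insert) auto
qed

lemma emb1_mult: "emb1 i A ** emb1 i B = emb1 i (A ** B)"
  for A B :: qop1 and i :: "'q::finite"
  unfolding vec_eq_iff emb1_mult_left_entry
  by (auto simp: emb1_entry matrix_matrix_mult_bool insert_absorb)

lemma emb1_one: "emb1 i (mat 1) = (mat 1 :: 'q::finite qopn)"
  unfolding vec_eq_iff emb1_entry by (auto simp: mat_def)

lemma emb1_diff: "emb1 i (A - B) = emb1 i A - emb1 i B"
  by (simp add: vec_eq_iff emb1_entry)

lemma emb1_add: "emb1 i (A + B) = emb1 i A + emb1 i B"
  by (simp add: vec_eq_iff emb1_entry)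

lemma emb1_scaleR: "emb1 i (r *\<^sub>R A) = r *\<^sub>R emb1 i A"
  by (simp add: vec_eq_iff emb1_entry)

lemma hermitian_emb1:
  assumes "hermitian A"
  shows "hermitian (emb1 i A)"
  unfolding hermitian_def
proof (intro allI)
  fix x y
  have "A $ (i \<in> x) $ (i \<in> y) = cnj (A $ (i \<in> y) $ (i \<in> x))"
    using assms unfolding hermitian_def by blast
  then show "emb1 i A $ x $ y = cnj (emb1 i A $ y $ x)"
    by (auto simp: emb1_entry)
qed

text \<open>\<open>acts_on S X\<close>: \<open>X\<close> is an operator on the qubits in \<open>S\<close> tensored with the identity
  on the others.\<close>

definition acts_on :: "'q::finite set \<Rightarrow> 'q qopn \<Rightarrow> bool" where
  "acts_on S X \<longleftrightarrow> (\<exists>f. \<forall>x y. X$x$y = (if x - S = y - S then f (x \<inter> S) (y \<inter> S) else 0))"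

lemma acts_onI:
  assumes "\<And>x y. X$x$y = (if x - S = y - S then f (x \<inter> S) (y \<inter> S) else 0)"
  shows "acts_on S X"
  using assms unfolding acts_on_def by blast

lemma acts_onE:
  assumes "acts_on S X"
  obtains f where "\<And>x y. X$x$y = (if x - S = y - S then f (x \<inter> S) (y \<inter> S) else 0)"
  using assms unfolding acts_on_def by blast

lemma acts_on_add:
  assumes "acts_on S X" "acts_on S Y"
  shows "acts_on S (X + Y)"
proof -
  obtain f g where f: "\<And>x y. X$x$y = (if x - S = y - S then f (x \<inter> S) (y \<inter> S) else 0)"
    and g: "\<And>x y. Y$x$y = (if x - S = y - S then g (x \<inter> S) (y \<inter> S) else 0)"
    using assms by (metis acts_onE)
  show ?thesis
    by (rule acts_onI[where f = "\<lambda>a c. f a c + g a c"]) (simp add: f g)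
qed

lemma acts_on_emb1: "acts_on {i} (emb1 i A)"
  by (rule acts_onI[where f = "\<lambda>a c. A $ (i \<in> a) $ (i \<in> c)"]) (simp add: emb1_def)

lemma acts_on_emb2: "acts_on {i, j} (emb2 i j g)"
  by (rule acts_onI[where f = "\<lambda>a c. g $ (i \<in> a, j \<in> a) $ (i \<in> c, j \<in> c)"])
     (simp add: emb2_def)

lemma acts_on_singleton_eq_emb1:
  assumes "acts_on {i} Z"
  shows "Z = emb1 i (\<chi> p q. Z $ (if p then {i} else {}) $ (if q then {i} else {}))"
proof -
  obtain f where f: "\<And>x y. Z$x$y = (if x - {i} = y - {i} then f (x \<inter> {i}) (y \<inter> {i}) else 0)"
    using assms by (metis acts_onE)
  have "x \<inter> {i} = (if i \<in> x then {i} else {})" for x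
    by auto
  then show ?thesis
    unfolding vec_eq_iff emb1_entry by (simp add: f)
qed

lemma acts_on_emb1_mult:
  assumes "acts_on S X" "i \<in> S"
  shows "acts_on S (emb1 i A ** X)"
proof -
  obtain f where f: "\<And>x y. X$x$y = (if x - S = y - S then f (x \<inter> S) (y \<inter> S) else 0)"
    using assms(1) by (metis acts_onE)
  show ?thesis
  proof (rule acts_onI[where f = "\<lambda>a c. A$(i \<in> a)$True * f (insert i a) c + A$(i \<in> a)$False * f (a - {i}) c"])
    fix x z :: "'a set"
    have "insert i x - S = x - S" "x - {i} - S = x - S" "insert i x \<inter> S = insert i (x \<inter> S)"
      "(x - {i}) \<inter> S = x \<inter> S - {i}"
      using assms(2) by auto
    then show "(emb1 i A ** X) $ x $ z = (if x - S = z - S then A$(i \<in> x \<inter> S)$True * f (insert i (x \<inter> S)) (z \<inter> S)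
       + A$(i \<in> x \<inter> S)$False * f (x \<inter> S - {i}) (z \<inter> S) else 0)"
      unfolding emb1_mult_left_entry f using assms(2) by simp
  qed
qed

lemma acts_on_mult_emb1:
  assumes "acts_on S X" "i \<in> S"
  shows "acts_on S (X ** emb1 i A)"
proof -
  obtain f where f: "\<And>x y. X$x$y = (if x - S = y - S then f (x \<inter> S) (y \<inter> S) else 0)"
    using assms(1) by (metis acts_onE)
  show ?thesis
  proof (rule acts_onI[where f = "\<lambda>a c. f a (insert i c) * A$True$(i \<in> c) + f a (c - {i}) * A$False$(i \<in> c)"])
    fix x z :: "'a set"
    have "insert i z - S = z - S" "z - {i} - S = z - S" "insert i z \<inter> S = insert i (z \<inter> S)"
      "(z - {i}) \<inter> S = z \<inter> S - {i}"
      using assms(2) by auto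
    then show "(X ** emb1 i A) $ x $ z = (if x - S = z - S then f (x \<inter> S) (insert i (z \<inter> S)) * A$True$(i \<in> z \<inter> S)
       + f (x \<inter> S) (z \<inter> S - {i}) * A$False$(i \<in> z \<inter> S) else 0)"
      unfolding emb1_mult_right_entry f using assms(2) by simp
  qed
qed

lemma emb1_commute_if_acts_on:
  assumes "acts_on S X" "i \<notin> S"
  shows "emb1 i A ** X = X ** emb1 i A"
proof -
  obtain f where f: "\<And>x y. X$x$y = (if x - S = y - S then f (x \<inter> S) (y \<inter> S) else 0)"
    using assms(1) by (metis acts_onE)
  show ?thesis
    unfolding vec_eq_iff
  proof (intro allI)
    fix x z :: "'a set"
    have "insert i x - S = z - S \<longleftrightarrow> (x - S - {i} = z - S - {i} \<and> i \<in> z)"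
      "x - {i} - S = z - S \<longleftrightarrow> (x - S - {i} = z - S - {i} \<and> i \<notin> z)"
      "x - S = insert i z - S \<longleftrightarrow> (x - S - {i} = z - S - {i} \<and> i \<in> x)"
      "x - S = z - {i} - S \<longleftrightarrow> (x - S - {i} = z - S - {i} \<and> i \<notin> x)"
      "insert i x \<inter> S = x \<inter> S" "(x - {i}) \<inter> S = x \<inter> S"
      "insert i z \<inter> S = z \<inter> S" "(z - {i}) \<inter> S = z \<inter> S"
      using assms(2) by blast+
    then show "(emb1 i A ** X) $ x $ z = (X ** emb1 i A) $ x $ z"
      unfolding emb1_mult_left_entry emb1_mult_right_entry f
      by (cases "i \<in> x"; cases "i \<in> z") auto
  qed
qed

lemma emb1_commute: "i \<noteq> j \<Longrightarrow> emb1 i A ** emb1 j B = emb1 j B ** emb1 i A"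
  for A B :: qop1 and i j :: "'q::finite"
  by (rule emb1_commute_if_acts_on[OF acts_on_emb1]) simp

text \<open>Since the 2x2 minors of \<open>P\<close> vanish, \<open>P$p$b * P$c$q = P$c$b * P$p$q\<close>; this turns
  \<open>P X P\<close> into \<open>P Z\<close>, where \<open>Z\<close> contracts \<open>X\<close> against \<open>P\<close> on qubit \<open>i\<close>.\<close>

lemma emb1_sandwich_det_zero:
  fixes X :: "'q::finite qopn" and P :: qop1
  assumes det: "P$False$False * P$True$True = P$False$True * P$True$False"
    and X: "acts_on S X" and i: "i \<in> S"
  obtains Z where "acts_on (S - {i}) Z" "emb1 i P ** X ** emb1 i P = emb1 i P ** Z"
proof -
  have minor: "P$p$b * P$c$q = P$c$b * P$p$q" for p b c q
    using det by (cases p; cases b; cases c; cases q) (simp_all add: mult.commute)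
  define Z :: "'q qopn" where "Z = (\<chi> x z. if (i \<in> x) = (i \<in> z) then
      P$True$True * X$(insert i x)$(insert i z) + P$False$True * X$(insert i x)$(z - {i})
    + P$True$False * X$(x - {i})$(insert i z) + P$False$False * X$(x - {i})$(z - {i}) else 0)"
  obtain f where f: "\<And>x y. X$x$y = (if x - S = y - S then f (x \<inter> S) (y \<inter> S) else 0)"
    using X by (metis acts_onE)
  have "acts_on (S - {i}) Z"
  proof (rule acts_onI[where f = "\<lambda>a c. P$True$True * f (insert i a) (insert i c)
      + P$False$True * f (insert i a) (c - {i}) + P$True$False * f (a - {i}) (insert i c)
      + P$False$False * f (a - {i}) (c - {i})"])
    fix x z :: "'q set"
    have e: "insert i x - S = x - S" "x - {i} - S = x - S" "insert i z - S = z - S" "z - {i} - S = z - S"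
      "insert i x \<inter> S = insert i (x \<inter> (S - {i}))" "(x - {i}) \<inter> S = x \<inter> (S - {i}) - {i}"
      "insert i z \<inter> S = insert i (z \<inter> (S - {i}))" "(z - {i}) \<inter> S = z \<inter> (S - {i}) - {i}"
      using i by auto
    have c: "(x - (S - {i}) = z - (S - {i})) \<longleftrightarrow> ((i \<in> x) = (i \<in> z) \<and> x - S = z - S)"
      using i by auto
    show "Z $ x $ z = (if x - (S - {i}) = z - (S - {i}) then
      P$True$True * f (insert i (x \<inter> (S - {i}))) (insert i (z \<inter> (S - {i})))
    + P$False$True * f (insert i (x \<inter> (S - {i}))) (z \<inter> (S - {i}) - {i})
    + P$True$False * f (x \<inter> (S - {i}) - {i}) (insert i (z \<inter> (S - {i})))
    + P$False$False * f (x \<inter> (S - {i}) - {i}) (z \<inter> (S - {i}) - {i}) else 0)"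
      unfolding c Z_def by (simp add: f e)
  qed
  moreover have "emb1 i P ** X ** emb1 i P = emb1 i P ** Z"
    unfolding vec_eq_iff
  proof (intro allI)
    fix x z :: "'q set"
    define p q where "p = (i \<in> x)" and "q = (i \<in> z)"
    define X1 X2 X3 X4 where "X1 = X$(insert i x)$(insert i z)" and "X2 = X$(insert i x)$(z - {i})"
      and "X3 = X$(x - {i})$(insert i z)" and "X4 = X$(x - {i})$(z - {i})"
    have "(emb1 i P ** X ** emb1 i P) $ x $ z = X1 * (P$p$True * P$True$q) + X2 * (P$p$True * P$False$q)
        + X3 * (P$p$False * P$True$q) + X4 * (P$p$False * P$False$q)"
      unfolding emb1_mult_right_entry emb1_mult_left_entry p_def q_def X1_def X2_def X3_def X4_def
      by (simp add: algebra_simps)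
    also have "\<dots> = P$p$q * (P$True$True * X1 + P$False$True * X2 + P$True$False * X3 + P$False$False * X4)"
      unfolding minor[of p True True q] minor[of p True False q] minor[of p False True q]
        minor[of p False False q]
      by (simp add: algebra_simps)
    also have "\<dots> = (emb1 i P ** Z) $ x $ z"
      unfolding emb1_mult_left_entry Z_def p_def q_def X1_def X2_def X3_def X4_def
      by (cases "i \<in> z") (simp_all add: insert_absorb)
    finally show "(emb1 i P ** X ** emb1 i P) $ x $ z = (emb1 i P ** Z) $ x $ z" .
  qed
  ultimately show ?thesis
    by (rule that)
qed

lemma acts_on_singletons_commute:
  assumes "acts_on {j} Z" "acts_on {k} Z'" "j \<noteq> k"
  shows "Z ** Z' = Z' ** Z"
  using emb1_commute_if_acts_on[OF assms(1)] assms(3)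
  by (subst (1 2) acts_on_singleton_eq_emb1[OF assms(2)]) simp

lemma acts_on_decomposition:
  fixes X :: "'q::finite qopn" and P :: qop1
  assumes idem: "P ** P = P" and trace: "P$False$False + P$True$True = 1"
    and X: "acts_on {i, j} X" and "j \<noteq> i"
    and comm: "X ** emb1 i P = emb1 i P ** X"
  obtains Z W where "acts_on {j} Z" "acts_on {j} W"
    "X = emb1 i P ** Z + (mat 1 - emb1 i P) ** W"
proof -
  have S: "{i, j} - {i} = {j}"
    using \<open>j \<noteq> i\<close> by auto
  have compl: "mat 1 - emb1 i P = emb1 i (mat 1 - P)"
    by (simp add: emb1_diff emb1_one)
  have compl_idem: "(mat 1 - P) ** (mat 1 - P) = mat 1 - P"
    using idem by (simp add: matrix_diff_ldistrib matrix_diff_rdistrib)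
  have compl_trace: "(mat 1 - P)$False$False + (mat 1 - P)$True$True = 1"
    using trace by (simp add: mat_def algebra_simps)
  obtain W where W: "acts_on {j} W"
    "emb1 i (mat 1 - P) ** X ** emb1 i (mat 1 - P) = emb1 i (mat 1 - P) ** W"
    using emb1_sandwich_det_zero[OF idem_trace_one_det_eq_zero[OF compl_idem compl_trace] X, of i] S
    by auto
  obtain Z where Z: "acts_on {j} Z" "emb1 i P ** X ** emb1 i P = emb1 i P ** Z"
    using emb1_sandwich_det_zero[OF idem_trace_one_det_eq_zero[OF idem trace] X, of i] S by auto
  have "X = pinching (emb1 i P) X"
    using pinching_eq_self[OF _ comm] by (simp add: emb1_mult idem)
  also have "\<dots> = emb1 i P ** Z + (mat 1 - emb1 i P) ** W"
    unfolding pinching_def compl Z(2) W(2) ..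
  finally show ?thesis
    using Z(1) W(1) that by blast
qed

section \<open>Pinching at a qubit\<close>

lemma pinch_at_eq_pinching: "pinch_at i A X = pinching (emb1 i (spec_proj A)) X"
  by (simp add: pinch_at_def pinching_def Let_def)

lemma
  fixes R :: qop1 and i :: "'q::finite"
  assumes "hermitian R" "0 < spectral_gap R"
  shows emb1_spec_proj_idem: "emb1 i (spec_proj R) ** emb1 i (spec_proj R) = emb1 i (spec_proj R)"
    and hermitian_emb1_spec_proj: "hermitian (emb1 i (spec_proj R))"
    and commutator_emb1_spec_proj: "commutator (emb1 i R) X
      = (- spectral_gap R) *\<^sub>R commutator (emb1 i (spec_proj R)) (X :: 'q qopn)"
proof -
  show "emb1 i (spec_proj R) ** emb1 i (spec_proj R) = emb1 i (spec_proj R)"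
    by (simp add: emb1_mult spec_proj_idem[OF assms])
  show "hermitian (emb1 i (spec_proj R))"
    by (rule hermitian_emb1[OF hermitian_spec_proj[OF assms]])
  have "emb1 i R = lambda_min R *\<^sub>R emb1 i (spec_proj R) + lambda_max R *\<^sub>R (mat 1 - emb1 i (spec_proj R))"
    by (subst spectral_decomposition[OF assms]) (simp add: emb1_add emb1_scaleR emb1_diff emb1_one)
  then show "commutator (emb1 i R) X = (- spectral_gap R) *\<^sub>R commutator (emb1 i (spec_proj R)) X"
    by (simp add: commutator_spectral_sum spectral_gap_def)
qed

lemma commutator_emb1_pinch_at:
  assumes "hermitian R" "0 < spectral_gap R"
  shows "commutator (emb1 i R) (pinch_at i R X) = 0"
  unfolding commutator_emb1_spec_proj[OF assms] pinch_at_eq_pinching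
  by (simp add: commutator_def pinching_commute[OF emb1_spec_proj_idem[OF assms]])

lemma opnorm_pinch_at_le:
  assumes "hermitian R" "0 < spectral_gap R"
  shows "opnorm (pinch_at i R X) \<le> opnorm X"
  unfolding pinch_at_eq_pinching
  by (rule opnorm_pinching_le[OF emb1_spec_proj_idem[OF assms] hermitian_emb1_spec_proj[OF assms]])

lemma opnorm_pinch_at_diff_le:
  assumes "hermitian R" "0 < spectral_gap R"
  shows "opnorm (pinch_at i R X - X) \<le> opnorm (commutator (emb1 i R) X) / spectral_gap R"
proof -
  have "opnorm (pinch_at i R X - X) \<le> opnorm (commutator (emb1 i (spec_proj R)) X)"
    unfolding pinch_at_eq_pinching opnorm_minus_commute[of "pinching _ X"]
    by (rule opnorm_diff_pinching_le[OF emb1_spec_proj_idem[OF assms] hermitian_emb1_spec_proj[OF assms]])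
  also have "\<dots> = opnorm (commutator (emb1 i R) X) / spectral_gap R"
    using assms(2) unfolding commutator_emb1_spec_proj[OF assms] opnorm_scaleR by simp
  finally show ?thesis .
qed

lemma commutator_emb1_pinch_at_other:
  "j \<noteq> i \<Longrightarrow> commutator (emb1 j A) (pinch_at i R X) = pinch_at i R (commutator (emb1 j A) X)"
  unfolding pinch_at_eq_pinching by (rule commutator_pinching[OF emb1_commute])

lemma acts_on_pinch_at: "acts_on S X \<Longrightarrow> i \<in> S \<Longrightarrow> acts_on S (pinch_at i A X)"
  unfolding pinch_at_def Let_def emb1_one[symmetric, of i] emb1_diff[symmetric]
  by (intro acts_on_add acts_on_mult_emb1 acts_on_emb1_mult)

lemma commutator_two_local_eq_zero:
  fixes X Y :: "'q::finite qopn" and R :: qop1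
  assumes herm: "hermitian R" and gap: "0 < spectral_gap R"
    and X: "acts_on {i, j} X" and Y: "acts_on {i, k} Y" and "j \<noteq> i" "k \<noteq> i" "j \<noteq> k"
    and RX: "commutator (emb1 i R) X = 0" and RY: "commutator (emb1 i R) Y = 0"
  shows "commutator X Y = 0"
proof -
  define Q where "Q = emb1 i (spec_proj R)"
  have Q_comm: "Z ** Q = Q ** Z" if "commutator (emb1 i R) Z = 0" for Z
  proof -
    have "commutator Q Z = 0"
      using that gap unfolding Q_def commutator_emb1_spec_proj[OF herm gap] by simp
    then show ?thesis
      by (simp add: commutator_def)
  qed
  have Q_comm_local: "Z ** Q = Q ** Z" if "acts_on {l} Z" "l \<noteq> i" for Z l
    unfolding Q_def using emb1_commute_if_acts_on[OF that(1)] that(2) by auto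
  note proj = spec_proj_idem[OF herm gap] trace_spec_proj[OF herm gap]
  obtain Z1 W1 where ZW1: "acts_on {j} Z1" "acts_on {j} W1" "X = Q ** Z1 + (mat 1 - Q) ** W1"
    using acts_on_decomposition[OF proj X \<open>j \<noteq> i\<close> Q_comm[OF RX, unfolded Q_def]] Q_def by blast
  obtain Z2 W2 where ZW2: "acts_on {k} Z2" "acts_on {k} W2" "Y = Q ** Z2 + (mat 1 - Q) ** W2"
    using acts_on_decomposition[OF proj Y \<open>k \<noteq> i\<close> Q_comm[OF RY, unfolded Q_def]] Q_def by blast
  have "X ** Y = Y ** X"
    unfolding ZW1(3) ZW2(3)
    by (rule block_diagonal_commute)
      (use ZW1 ZW2 Q_comm_local \<open>j \<noteq> i\<close> \<open>k \<noteq> i\<close> \<open>j \<noteq> k\<close> acts_on_singletons_commute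
        emb1_spec_proj_idem[OF herm gap] in \<open>auto simp: Q_def\<close>)
  then show ?thesis
    by (simp add: commutator_def)
qed

section \<open>The pinched Hamiltonian\<close>

lemma commutator_edge_terms_eq_zero:
  fixes H :: "'q::finite \<times> 'q \<Rightarrow> 'q qopn" and R :: qop1
  assumes edge_distinct: "\<And>a b. (a, b) \<in> E \<Longrightarrow> a \<noteq> b"
    and edge_unique: "\<And>a b. (a, b) \<in> E \<Longrightarrow> (b, a) \<notin> E"
    and local: "\<And>a b. (a, b) \<in> E \<Longrightarrow> acts_on {a, b} (H (a, b))"
    and herm: "hermitian R" and gap: "0 < spectral_gap R"
    and comm: "\<And>e. e \<in> E \<Longrightarrow> i \<in> {fst e, snd e} \<Longrightarrow> commutator (emb1 i R) (H e) = 0"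
    and e1: "e1 \<in> E" "i \<in> {fst e1, snd e1}" and e2: "e2 \<in> E" "i \<in> {fst e2, snd e2}"
  shows "commutator (H e1) (H e2) = 0"
proof (cases "e1 = e2")
  case True
  then show ?thesis
    by (simp add: commutator_def)
next
  case False
  have other_end: "\<exists>j. j \<noteq> i \<and> e \<in> {(i, j), (j, i)} \<and> acts_on {i, j} (H e)"
    if "e \<in> E" "i \<in> {fst e, snd e}" for e
  proof -
    obtain a b where ab: "e = (a, b)"
      by (cases e)
    have "a \<noteq> b" "acts_on {a, b} (H e)"
      using that(1) ab edge_distinct local by auto
    moreover have "i = a \<or> i = b"
      using that(2) ab by auto
    ultimately show ?thesis
      using ab by (auto simp: insert_commute)
  qed
  obtain j where j: "j \<noteq> i" "e1 \<in> {(i, j), (j, i)}" "acts_on {i, j} (H e1)"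
    using other_end[OF e1] by blast
  obtain k where k: "k \<noteq> i" "e2 \<in> {(i, k), (k, i)}" "acts_on {i, k} (H e2)"
    using other_end[OF e2] by blast
  have "j \<noteq> k"
    using j(2) k(2) \<open>e1 \<noteq> e2\<close> e1(1) e2(1) edge_unique by auto
  then show ?thesis
    using commutator_two_local_eq_zero[OF herm gap j(3) k(3) j(1) k(1)]
      comm[OF e1] comm[OF e2] by blast
qed

lemma acts_on_superop_at: "acts_on S X \<Longrightarrow> i \<in> S \<Longrightarrow> acts_on S (superop_at pin R i X)"
  by (simp add: superop_at_def acts_on_pinch_at)

lemma commutator_emb1_superop_at_other:
  "j \<noteq> i \<Longrightarrow> commutator (emb1 j A) (superop_at pin R i X) = superop_at pin R i (commutator (emb1 j A) X)"
  by (simp add: superop_at_def commutator_emb1_pinch_at_other)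

lemma superop_at_zero [simp]: "superop_at pin R i 0 = 0"
  by (simp add: superop_at_def pinch_at_eq_pinching)

lemma opnorm_superop_at_le:
  assumes "pin i \<Longrightarrow> hermitian (R i) \<and> 0 < spectral_gap (R i)"
  shows "opnorm (superop_at pin R i X) \<le> opnorm X"
  by (cases "pin i") (simp_all add: superop_at_def assms opnorm_pinch_at_le)

lemma opnorm_superop_at_diff_le:
  assumes site: "pin i \<Longrightarrow> hermitian (R i) \<and> \<eta> \<le> spectral_gap (R i)" and "0 < \<eta>" "0 \<le> \<kappa>"
    and comm: "pin i \<Longrightarrow> opnorm (commutator (emb1 i (R i)) X) \<le> \<kappa>"
  shows "opnorm (superop_at pin R i X - X) \<le> \<kappa> / \<eta>"
proof (cases "pin i")
  case True
  then have "hermitian (R i)" "0 < spectral_gap (R i)"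
    using site \<open>0 < \<eta>\<close> by auto
  then have "opnorm (superop_at pin R i X - X) \<le> opnorm (commutator (emb1 i (R i)) X) / spectral_gap (R i)"
    using True by (simp add: superop_at_def opnorm_pinch_at_diff_le)
  also have "\<dots> \<le> \<kappa> / \<eta>"
    using True site comm \<open>0 < \<eta>\<close> \<open>0 \<le> \<kappa>\<close> by (intro frac_le) auto
  finally show ?thesis .
next
  case False
  then show ?thesis
    using assms by (simp add: superop_at_def)
qed

lemma commutator_emb1_superop_pair:
  assumes "a \<noteq> b" "i \<in> {a, b}" "pin i" "hermitian (R i)" "0 < spectral_gap (R i)"
  shows "commutator (emb1 i (R i)) (superop_at pin R a (superop_at pin R b X)) = 0"
proof (cases "i = a")
  case True
  then show ?thesis
    using assms by (simp add: superop_at_def commutator_emb1_pinch_at)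
next
  case False
  then show ?thesis
    using assms by (simp add: commutator_emb1_superop_at_other superop_at_def[of pin R b]
        commutator_emb1_pinch_at)
qed

lemma opnorm_superop_pair_diff_le:
  assumes "a \<noteq> b"
    and site: "\<And>i. pin i \<Longrightarrow> hermitian (R i) \<and> \<eta> i \<le> spectral_gap (R i)"
    and \<eta>: "\<And>i. 0 < \<eta> i" and \<kappa>: "\<And>i. 0 \<le> \<kappa> i"
    and comm_a: "pin a \<Longrightarrow> opnorm (commutator (emb1 a (R a)) X) \<le> \<kappa> a"
    and comm_b: "pin b \<Longrightarrow> opnorm (commutator (emb1 b (R b)) X) \<le> \<kappa> b"
  shows "opnorm (superop_at pin R a (superop_at pin R b X) - X) \<le> \<kappa> a / \<eta> a + \<kappa> b / \<eta> b"
proof -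
  define Y where "Y = superop_at pin R b X"
  \<comment> \<open>pinching at \<open>b\<close> does not increase the commutator with \<open>R a\<close>\<close>
  have "opnorm (commutator (emb1 a (R a)) Y) \<le> \<kappa> a" if "pin a"
  proof -
    have "opnorm (commutator (emb1 a (R a)) Y) \<le> opnorm (commutator (emb1 a (R a)) X)"
      unfolding Y_def commutator_emb1_superop_at_other[OF \<open>a \<noteq> b\<close>]
      using site \<eta> by (intro opnorm_superop_at_le) (auto intro: less_le_trans)
    then show ?thesis
      using comm_a[OF that] by linarith
  qed
  then have "opnorm (superop_at pin R a Y - Y) \<le> \<kappa> a / \<eta> a"
    using site \<eta> \<kappa> by (intro opnorm_superop_at_diff_le) auto
  moreover have "opnorm (Y - X) \<le> \<kappa> b / \<eta> b"
    unfolding Y_def using site \<eta> \<kappa> comm_b by (intro opnorm_superop_at_diff_le) auto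
  moreover have "opnorm (superop_at pin R a Y - X) \<le> opnorm (superop_at pin R a Y - Y) + opnorm (Y - X)"
    using opnorm_add_le[of "superop_at pin R a Y - Y" "Y - X"] by simp
  ultimately show ?thesis
    unfolding Y_def by linarith
qed

theorem lemma5p2:
  fixes E :: "('q::finite \<times> 'q) set"
    and h :: "'q \<times> 'q \<Rightarrow> 'q qopn"
    and \<eta> \<kappa> :: "'q \<Rightarrow> real"
    and pin :: "'q \<Rightarrow> bool"
    and R :: "'q \<Rightarrow> qop1"
  assumes edge_distinct: "\<And>i j. (i, j) \<in> E \<Longrightarrow> i \<noteq> j"
    and edge_unique: "\<And>i j. (i, j) \<in> E \<Longrightarrow> (j, i) \<notin> E"
    and h_herm: "\<And>e. e \<in> E \<Longrightarrow> hermitian (h e)"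
    and h_local: "\<And>i j. (i, j) \<in> E \<Longrightarrow> \<exists>g. h (i, j) = emb2 i j g"
    and eta_pos: "\<And>i. \<eta> i > 0"
    and kappa_nonneg: "\<And>i. \<kappa> i \<ge> 0"
    and R_herm: "\<And>i. pin i \<Longrightarrow> hermitian (R i)"
    and R_gap: "\<And>i. pin i \<Longrightarrow> spectral_gap (R i) \<ge> \<eta> i"
    and R_comm: "\<And>i j. pin i \<Longrightarrow> (i, j) \<in> E \<Longrightarrow>
                   opnorm (commutator (emb1 i (R i)) (h (i, j))) \<le> \<kappa> i"
    and R_comm': "\<And>i j. pin i \<Longrightarrow> (j, i) \<in> E \<Longrightarrow>
                   opnorm (commutator (emb1 i (R i)) (h (j, i))) \<le> \<kappa> i"
  defines "h' \<equiv> (\<lambda>(i, j). superop_at pin R i (superop_at pin R j (h (i, j))))"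
  shows "(\<forall>i. pin i \<longrightarrow>
            (\<forall>e1\<in>E. \<forall>e2\<in>E. i \<in> {fst e1, snd e1} \<longrightarrow> i \<in> {fst e2, snd e2} \<longrightarrow>
                commutator (h' e1) (h' e2) = 0) \<and>
            (\<forall>e\<in>E. i \<in> {fst e, snd e} \<longrightarrow> commutator (emb1 i (R i)) (h' e) = 0))
       \<and> (\<forall>(i, j)\<in>E. opnorm (h' (i, j) - h (i, j)) \<le> 4 * (\<kappa> i / \<eta> i + \<kappa> j / \<eta> j))"
proof -
  have site: "hermitian (R i)" "0 < spectral_gap (R i)" if "pin i" for i
    using R_herm[OF that] R_gap[OF that] eta_pos[of i] by auto
  have h': "h' (a, b) = superop_at pin R a (superop_at pin R b (h (a, b)))" for a b
    by (simp add: h'_def)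
  have local: "acts_on {a, b} (h' (a, b))" if "(a, b) \<in> E" for a b
    using h_local[OF that] by (auto simp: h' intro!: acts_on_superop_at acts_on_emb2)
  have comm_R: "commutator (emb1 i (R i)) (h' e) = 0" if "pin i" "e \<in> E" "i \<in> {fst e, snd e}" for i e
    using that edge_distinct site by (cases e) (auto simp: h' intro!: commutator_emb1_superop_pair)
  have "commutator (h' e1) (h' e2) = 0"
    if "pin i" "e1 \<in> E" "e2 \<in> E" "i \<in> {fst e1, snd e1}" "i \<in> {fst e2, snd e2}" for i e1 e2
    by (rule commutator_edge_terms_eq_zero[OF edge_distinct edge_unique local
          site[OF that(1)] comm_R[OF that(1)] that(2,4,3,5)])
  moreover have "opnorm (h' (a, b) - h (a, b)) \<le> 4 * (\<kappa> a / \<eta> a + \<kappa> b / \<eta> b)"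
    if "(a, b) \<in> E" for a b
  proof -
    have "opnorm (h' (a, b) - h (a, b)) \<le> \<kappa> a / \<eta> a + \<kappa> b / \<eta> b"
      unfolding h' using that edge_distinct R_herm R_gap eta_pos kappa_nonneg R_comm R_comm'
      by (intro opnorm_superop_pair_diff_le) auto
    moreover have "0 \<le> \<kappa> a / \<eta> a" "0 \<le> \<kappa> b / \<eta> b"
      using eta_pos kappa_nonneg by (simp_all add: less_imp_le)
    ultimately show ?thesis
      by (smt (verit))
  qed
  ultimately show ?thesis
    using comm_R by blast
qed

end
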